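(* Let $d>1$ be a square-free integer, $F=\mathbf Q(\sqrt d)$, and let $(V,h,\psi)$ be a Hodge structure of K3 type with $\mathrm{End}_{Hod}(V)=F$ and $m=\dim_F V$ odd. Then $a=d+\sqrt d$ is totally positive, and the quadratic spaces $(V,\psi)$ and $(V,\psi_a)$, where $\psi_a(v,w)=\psi(av,w)$, are not isometric over $\mathbf Q$.
   Context: A Hodge structure of K3 type is a simple polarized rational weight two Hodge structure with $\dim V^{2,0}=1$; $\mathrm{End}_{Hod}(V)$ is the algebra of endomorphisms of the Hodge structure. An element of a totally real field is totally positive if all its real embeddings are positive. *)

theory Defs
  imports "HOL-Analysis.Analysis" "HOL-Computational_Algebra.Squarefree"
begin

text \<open>V is modelled as rat^'n (a finite-dimensional Q-vector space with a basis),
  V_C = complex^'n, a Q-bilinear form psi is given by its Gram matrix B.\<close>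

definition bilin :: "'a::comm_ring_1^'n^'n \<Rightarrow> 'a^'n \<Rightarrow> 'a^'n \<Rightarrow> 'a" where
  "bilin B v w = (\<Sum>i\<in>UNIV. \<Sum>j\<in>UNIV. v$i * B$i$j * w$j)"

definition cvec :: "rat^'n \<Rightarrow> complex^'n" where
  "cvec v = (\<chi> i. of_rat (v$i))"

definition cmat :: "rat^'n^'m \<Rightarrow> complex^'n^'m" where
  "cmat M = (\<chi> i j. of_rat (M$i$j))"

definition cconj :: "complex^'n \<Rightarrow> complex^'n" where
  "cconj v = (\<chi> i. cnj (v$i))"

definition complex_subspace :: "(complex^'n) set \<Rightarrow> bool" where
  "complex_subspace S \<longleftrightarrow> 0 \<in> S \<and> (\<forall>x\<in>S. \<forall>y\<in>S. x + y \<in> S) \<and> (\<forall>c x. x \<in> S \<longrightarrow> c *s x \<in> S)"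

definition cspan :: "(complex^'n) set \<Rightarrow> (complex^'n) set" where
  "cspan S = \<Inter>{T. complex_subspace T \<and> S \<subseteq> T}"

definition rat_subspace :: "(rat^'n) set \<Rightarrow> bool" where
  "rat_subspace W \<longleftrightarrow> 0 \<in> W \<and> (\<forall>x\<in>W. \<forall>y\<in>W. x + y \<in> W) \<and> (\<forall>c x. x \<in> W \<longrightarrow> c *s x \<in> W)"

definition hodge_weight2 :: "(complex^'n) set \<Rightarrow> (complex^'n) set \<Rightarrow> (complex^'n) set \<Rightarrow> bool" where
  "hodge_weight2 H20 H11 H02 \<longleftrightarrow>
     complex_subspace H20 \<and> complex_subspace H11 \<and> complex_subspace H02 \<and>
     (\<forall>v. \<exists>!(x,y,z). x \<in> H20 \<and> y \<in> H11 \<and> z \<in> H02 \<and> v = x + y + z) \<and>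
     H02 = cconj ` H20 \<and> cconj ` H11 = H11"

definition polarization :: "rat^'n^'n \<Rightarrow> (complex^'n) set \<Rightarrow> (complex^'n) set \<Rightarrow> (complex^'n) set \<Rightarrow> bool" where
  "polarization B H20 H11 H02 \<longleftrightarrow>
     transpose B = B \<and>
     (\<forall>x\<in>H20. \<forall>y\<in>H20 \<union> H11. bilin (cmat B) x y = 0) \<and>
     (\<forall>x\<in>H02. \<forall>y\<in>H02 \<union> H11. bilin (cmat B) x y = 0) \<and>
     (\<forall>x\<in>H20. x \<noteq> 0 \<longrightarrow> Re (bilin (cmat B) x (cconj x)) > 0) \<and>
     (\<forall>x\<in>H11. x \<noteq> 0 \<longrightarrow> Re (bilin (cmat B) x (cconj x)) < 0)"

definition sub_hodge :: "(complex^'n) set \<Rightarrow> (complex^'n) set \<Rightarrow> (complex^'n) set \<Rightarrow> (rat^'n) set \<Rightarrow> bool" where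
  "sub_hodge H20 H11 H02 W \<longleftrightarrow> rat_subspace W \<and>
     (\<forall>v\<in>cspan (cvec ` W). \<exists>x\<in>cspan (cvec ` W) \<inter> H20. \<exists>y\<in>cspan (cvec ` W) \<inter> H11.
        \<exists>z\<in>cspan (cvec ` W) \<inter> H02. v = x + y + z)"

definition simple_hodge :: "(complex^'n) set \<Rightarrow> (complex^'n) set \<Rightarrow> (complex^'n) set \<Rightarrow> bool" where
  "simple_hodge H20 H11 H02 \<longleftrightarrow> (\<forall>W. sub_hodge H20 H11 H02 W \<longrightarrow> W = {0} \<or> W = UNIV)"

definition K3_type :: "rat^'n^'n \<Rightarrow> (complex^'n) set \<Rightarrow> (complex^'n) set \<Rightarrow> (complex^'n) set \<Rightarrow> bool" where
  "K3_type B H20 H11 H02 \<longleftrightarrow> hodge_weight2 H20 H11 H02 \<and> polarization B H20 H11 H02 \<and>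
     simple_hodge H20 H11 H02 \<and> (\<exists>\<omega>. \<omega> \<noteq> 0 \<and> H20 = {c *s \<omega> | c. True})"

definition hodge_endo :: "(complex^'n) set \<Rightarrow> (complex^'n) set \<Rightarrow> (complex^'n) set \<Rightarrow> rat^'n^'n \<Rightarrow> bool" where
  "hodge_endo H20 H11 H02 M \<longleftrightarrow>
     (\<forall>x\<in>H20. cmat M *v x \<in> H20) \<and> (\<forall>x\<in>H11. cmat M *v x \<in> H11) \<and> (\<forall>x\<in>H02. cmat M *v x \<in> H02)"

definition quad_field :: "int \<Rightarrow> real set" where
  "quad_field d = {of_rat p + of_rat q * sqrt (of_int d) | p q. True}"

definition real_embedding :: "int \<Rightarrow> (real \<Rightarrow> real) \<Rightarrow> bool" where
  "real_embedding d \<sigma> \<longleftrightarrow> \<sigma> 1 = 1 \<and>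
     (\<forall>x\<in>quad_field d. \<forall>y\<in>quad_field d. \<sigma> (x + y) = \<sigma> x + \<sigma> y \<and> \<sigma> (x * y) = \<sigma> x * \<sigma> y)"

definition totally_positive :: "int \<Rightarrow> real \<Rightarrow> bool" where
  "totally_positive d x \<longleftrightarrow> x \<in> quad_field d \<and> (\<forall>\<sigma>. real_embedding d \<sigma> \<longrightarrow> \<sigma> x > 0)"

end

theory Submission
  imports
    Defs
    "HOL-Computational_Algebra.Polynomial_Factorial"
    "HOL-Computational_Algebra.Field_as_Ring"
begin

text \<open>
  The two real embeddings send \<open>a = d + \<surd>d\<close> to \<open>d \<plusminus> \<surd>d\<close>, both positive since \<open>\<surd>d < d\<close>.

  For the isometry question only determinants matter. Since \<open>J\<^sup>2 = d\<close> and \<open>d\<close> is not a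
  rational square, \<open>det (t + J)\<close> divides \<open>(t\<^sup>2 - d)\<^sup>n\<close> with \<open>t\<^sup>2 - d\<close> irreducible, so
  \<open>n = 2m\<close> and \<open>det (t + J) = (t\<^sup>2 - d)\<^sup>m\<close> up to sign: multiplication by \<open>a\<close> has
  determinant \<open>N(a)\<^sup>m = (d\<^sup>2 - d)\<^sup>m\<close>. The Hodge--Riemann relations make \<open>\<psi>\<close> nondegenerate,
  so an isometry \<open>P\<close> from \<open>\<psi>\<close> to \<open>\<psi>\<^sub>a\<close> forces \<open>(d\<^sup>2 - d)\<^sup>m det(P)\<^sup>2 = \<plusminus>1\<close>. As \<open>m\<close>
  is odd, \<open>d (d - 1)\<close> would be a rational square, hence an integer square; but it lies
  strictly between \<open>(d - 1)\<^sup>2\<close> and \<open>d\<^sup>2\<close>.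
\<close>

section \<open>Squares of integers and rationals\<close>

lemma int_square_of_rat_square:
  fixes r :: rat and n :: int
  assumes "r^2 = of_int n"
  shows "\<exists>m. n = m^2"
proof -
  obtain a b where ab: "quotient_of r = (a, b)" by (cases "quotient_of r") auto
  have b_pos: "b > 0" and coprime: "coprime a b" and r: "r = of_int a / of_int b"
    using quotient_of_denom_pos[OF ab] quotient_of_coprime[OF ab] quotient_of_div[OF ab] by auto
  have "of_int (a^2) = (of_int (n * b^2) :: rat)"
    using assms b_pos unfolding r by (simp add: power_divide field_simps)
  hence a_sq: "a^2 = n * b^2" by (rule of_int_eq_iff[THEN iffD1])
  have "coprime (b^2) (a^2)" using coprime by (simp add: coprime_commute)
  with a_sq have "is_unit (b^2)" using coprime_common_divisor[of "b^2" "a^2" "b^2"] by simp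
  hence "b^2 = 1" by simp
  thus ?thesis using a_sq by auto
qed

lemma squarefree_int_not_square:
  fixes d m :: int
  assumes "d > 1" and "squarefree d"
  shows "d \<noteq> m^2"
proof
  assume d: "d = m^2"
  hence "is_unit m" using assms(2) unfolding squarefree_def by simp
  hence "\<bar>m\<bar> = 1" by simp
  hence "m^2 = 1" by (metis power2_abs power_one)
  thus False using d assms(1) by simp
qed

lemma mult_pred_not_square:
  fixes d m :: int
  assumes "d > 1"
  shows "d * (d - 1) \<noteq> m^2"
proof
  assume sq: "d * (d - 1) = m^2"
  show False
  proof (cases "\<bar>m\<bar> \<le> d - 1")
    case True
    hence "\<bar>m\<bar>^2 \<le> (d - 1)^2" by (intro power_mono) auto
    thus False using sq assms by (simp add: power2_eq_square algebra_simps)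
  next
    case False
    hence "d^2 \<le> \<bar>m\<bar>^2" using assms by (intro power_mono) auto
    thus False using sq assms by (simp add: power2_eq_square algebra_simps)
  qed
qed

lemma square_of_odd_power_times_square:
  fixes c s r :: "'a::linordered_field"
  assumes "c^2 = 1" and "s > 0" and "odd m" and "c * s^m * r^2 = 1"
  shows "\<exists>q. q^2 = s"
proof -
  obtain j where m: "m = Suc (2 * j)" using \<open>odd m\<close> oddE by fastforce
  define q where "q = s^j * r"
  have csq: "c * s * q^2 = 1"
    using assms(4) unfolding m q_def by (simp add: power_mult_distrib power_mult[symmetric] mult_ac)
  have "c > 0"
  proof (rule ccontr)
    assume "\<not> c > 0"
    hence "c * s * q^2 \<le> 0" using \<open>s > 0\<close> by (simp add: mult_nonpos_nonneg)
    thus False using csq by simp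
  qed
  with \<open>c^2 = 1\<close> have "c = 1" by (simp add: power2_eq_1_iff)
  with csq have "s * q^2 = 1" and "q \<noteq> 0" by auto
  hence "(1 / q)^2 = s" by (simp add: field_simps)
  thus ?thesis ..
qed

section \<open>Total positivity in \<open>\<rat>(\<surd>d)\<close>\<close>

lemma quad_fieldI: "of_rat p + of_rat q * sqrt (of_int d) \<in> quad_field d"
  unfolding quad_field_def by blast

lemma of_rat_in_quad_field: "of_rat p \<in> quad_field d"
  using quad_fieldI[of p 0] by simp

lemma sqrt_in_quad_field: "sqrt (of_int d) \<in> quad_field d"
  using quad_fieldI[of 0 1] by simp

lemma real_embedding_add:
  "real_embedding d \<sigma> \<Longrightarrow> x \<in> quad_field d \<Longrightarrow> y \<in> quad_field d \<Longrightarrow> \<sigma> (x + y) = \<sigma> x + \<sigma> y"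
  unfolding real_embedding_def by blast

lemma real_embedding_mult:
  "real_embedding d \<sigma> \<Longrightarrow> x \<in> quad_field d \<Longrightarrow> y \<in> quad_field d \<Longrightarrow> \<sigma> (x * y) = \<sigma> x * \<sigma> y"
  unfolding real_embedding_def by blast

lemma real_embedding_of_nat:
  assumes "real_embedding d \<sigma>"
  shows "\<sigma> (of_nat k) = of_nat k"
proof (induction k)
  case 0
  have "\<sigma> (0 + 0) = \<sigma> 0 + \<sigma> 0"
    using real_embedding_add[OF assms of_rat_in_quad_field of_rat_in_quad_field, of 0 0] by simp
  then show ?case by simp
next
  case (Suc k)
  have "\<sigma> (of_nat k + 1) = \<sigma> (of_nat k) + \<sigma> 1"
    using real_embedding_add[OF assms of_rat_in_quad_field of_rat_in_quad_field, of "of_nat k" 1]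
    by simp
  also have "\<sigma> 1 = 1" using assms unfolding real_embedding_def by blast
  finally show ?case using Suc by (simp add: add.commute)
qed

lemma totally_positive_plus_sqrt:
  fixes d :: int
  assumes "d > 1"
  shows "totally_positive d (of_int d + sqrt (of_int d))"
  unfolding totally_positive_def
proof (intro conjI allI impI)
  show "of_int d + sqrt (of_int d) \<in> quad_field d"
    using quad_fieldI[of "of_int d" 1 d] by simp
  fix \<sigma> assume emb: "real_embedding d \<sigma>"
  have d_in: "of_int d \<in> quad_field d"
    using of_rat_in_quad_field[of "of_int d" d] by simp
  have \<sigma>_d: "\<sigma> (of_int d) = of_int d"
    using real_embedding_of_nat[OF emb, of "nat d"] assms by simp
  have "\<sigma> (sqrt (of_int d))^2 = \<sigma> (sqrt (of_int d) * sqrt (of_int d))"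
    using real_embedding_mult[OF emb sqrt_in_quad_field sqrt_in_quad_field]
    by (simp only: power2_eq_square)
  also have "sqrt (of_int d) * sqrt (of_int d) = (of_int d :: real)" using assms by simp
  finally have "\<bar>\<sigma> (sqrt (of_int d))\<bar> = sqrt (of_int d)" using \<sigma>_d by (metis real_sqrt_abs)
  moreover have "sqrt (of_int d) < (of_int d :: real)"
    using assms real_sqrt_less_iff[of "of_int d" "of_int d * of_int d"] by simp
  moreover have "\<sigma> (of_int d + sqrt (of_int d)) = of_int d + \<sigma> (sqrt (of_int d))"
    using real_embedding_add[OF emb d_in sqrt_in_quad_field] \<sigma>_d by simp
  ultimately show "\<sigma> (of_int d + sqrt (of_int d)) > 0" by linarith
qed

lemma bilin_eq_sum_matrix_vector_mult: "bilin B v w = (\<Sum>i\<in>UNIV. v$i * (B *v w)$i)"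
  unfolding bilin_def matrix_vector_mult_def by (simp add: sum_distrib_left mult.assoc)

lemma bilin_matrix_vector_mult:
  fixes B M N :: "'a::comm_ring_1^'n^'n"
  shows "bilin B (M *v x) (N *v y) = bilin (transpose M ** B ** N) x y"
proof -
  have "bilin B (M *v x) (N *v y) = (\<Sum>i\<in>UNIV. \<Sum>j\<in>UNIV. M$i$j * x$j * (B *v (N *v y))$i)"
    by (simp add: bilin_eq_sum_matrix_vector_mult matrix_vector_mult_def sum_distrib_right)
  also have "\<dots> = (\<Sum>j\<in>UNIV. \<Sum>i\<in>UNIV. M$i$j * x$j * (B *v (N *v y))$i)"
    by (rule sum.swap)
  also have "\<dots> = (\<Sum>j\<in>UNIV. x$j * (transpose M *v (B *v (N *v y)))$j)"
    by (simp add: matrix_vector_mult_def transpose_def sum_distrib_left mult_ac)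
  also have "\<dots> = bilin (transpose M ** B ** N) x y"
    by (simp add: bilin_eq_sum_matrix_vector_mult matrix_vector_mul_assoc matrix_mul_assoc)
  finally show ?thesis .
qed

lemma bilin_axis: "bilin M (axis i 1) (axis j 1) = M$i$j"
proof -
  have "axis i 1 $ a * M$a$b * axis j 1 $ b = (if a = i then if b = j then M$a$b else 0 else 0)" for a b
    by (simp add: axis_def)
  hence "bilin M (axis i 1) (axis j 1)
      = (\<Sum>a\<in>UNIV. if a = i then (\<Sum>b\<in>UNIV. if b = j then M$a$b else 0) else 0)"
    unfolding bilin_def by (intro sum.cong) simp_all
  thus ?thesis by simp
qed

lemma bilin_inject:
  fixes M N :: "'a::comm_ring_1^'n^'n"
  assumes "\<And>v w. bilin M v w = bilin N v w"
  shows "M = N"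
  using assms bilin_axis by (metis vec_eq_iff)

lemma bilin_commute:
  fixes C :: "'a::comm_ring_1^'n^'n"
  assumes "transpose C = C"
  shows "bilin C a b = bilin C b a"
proof -
  have C: "C$i$j = C$j$i" for i j using assms by (metis transpose_def vec_lambda_beta)
  have "bilin C a b = (\<Sum>j\<in>UNIV. \<Sum>i\<in>UNIV. a$i * C$i$j * b$j)"
    unfolding bilin_def by (rule sum.swap)
  also have "\<dots> = bilin C b a" unfolding bilin_def using C by (simp add: mult_ac)
  finally show ?thesis .
qed

lemma bilin_add_left: "bilin C (x + y) w = bilin C x w + bilin C y w"
  unfolding bilin_def by (simp add: algebra_simps sum.distrib)

lemma det_isometry_mult:
  fixes A B P :: "'a::idom^'n^'n"
  assumes "det B \<noteq> 0" and "\<forall>v w. bilin B (A *v (P *v v)) (P *v w) = bilin B v w"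
  shows "det A * det P ^ 2 = 1"
proof -
  have "bilin (transpose (A ** P) ** B ** P) v w = bilin B v w" for v w
    using assms(2) by (simp add: bilin_matrix_vector_mult[symmetric] matrix_vector_mul_assoc)
  hence "transpose (A ** P) ** B ** P = B" by (rule bilin_inject)
  hence "det (transpose (A ** P) ** B ** P) = det B" by simp
  hence "det A * det P ^ 2 * det B = 1 * det B"
    by (simp add: det_mul det_transpose power2_eq_square mult_ac)
  with assms(1) show ?thesis by (rule mult_right_cancel[THEN iffD1])
qed

section \<open>Nondegeneracy of the polarization\<close>

lemma transpose_cmat: "transpose (cmat B) = cmat (transpose B)"
  by (simp add: transpose_def cmat_def vec_eq_iff)

lemma cmat_mult_cvec: "cmat B *v cvec v = cvec (B *v v)"
  by (simp add: matrix_vector_mult_def cmat_def cvec_def vec_eq_iff of_rat_mult of_rat_sum)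

lemma cvec_eq_0_iff: "cvec v = 0 \<longleftrightarrow> v = 0"
  by (simp add: cvec_def vec_eq_iff)

text \<open>Pairing a radical vector \<open>x + y + cconj x'\<close> (with \<open>x, x' \<in> H20\<close>, \<open>y \<in> H11\<close>) with
  \<open>cconj x\<close>, \<open>cconj y\<close> and \<open>x'\<close> isolates \<open>\<psi>(x, cconj x)\<close>, \<open>\<psi>(y, cconj y)\<close> and
  \<open>\<psi>(x', cconj x')\<close>, which the Hodge--Riemann relations force to be nonzero unless the
  component vanishes.\<close>
lemma polarization_radical_trivial:
  assumes hodge: "hodge_weight2 H20 H11 H02" and pol: "polarization B H20 H11 H02"
    and radical: "\<And>w. bilin (cmat B) u w = 0"
  shows "u = 0"
proof -
  let ?b = "bilin (cmat B)"
  have sym: "?b a c = ?b c a" for a c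
    using pol by (intro bilin_commute) (simp add: polarization_def transpose_cmat)
  have o20: "?b x y = 0" if "x \<in> H20" "y \<in> H20 \<union> H11" for x y
    using pol that unfolding polarization_def by blast
  have o02: "?b x y = 0" if "x \<in> H02" "y \<in> H02 \<union> H11" for x y
    using pol that unfolding polarization_def by blast
  have pos20: "Re (?b x (cconj x)) > 0" if "x \<in> H20" "x \<noteq> 0" for x
    using pol that unfolding polarization_def by blast
  have neg11: "Re (?b x (cconj x)) < 0" if "x \<in> H11" "x \<noteq> 0" for x
    using pol that unfolding polarization_def by blast
  have H02: "H02 = cconj ` H20" and H11: "cconj ` H11 = H11"
    using hodge unfolding hodge_weight2_def by auto
  obtain x y z where x: "x \<in> H20" and y: "y \<in> H11" and z: "z \<in> H02" and u: "u = x + y + z"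
    using hodge unfolding hodge_weight2_def by blast
  obtain x' where x': "x' \<in> H20" and z_eq: "z = cconj x'" using z H02 by blast
  have cx: "cconj x \<in> H02" and cy: "cconj y \<in> H11" using x y H02 H11 by blast+
  have pair: "?b x w + ?b y w + ?b z w = 0" for w
    using radical[of w] unfolding u by (simp add: bilin_add_left)
  have "?b x (cconj x) = 0"
    using pair[of "cconj x"] o02[OF cx, of y] o02[of z "cconj x"] z cx y sym[of y] by simp
  hence "x = 0" using pos20[OF x] by fastforce
  have "?b y (cconj y) = 0"
    using pair[of "cconj y"] o20[OF x, of "cconj y"] o02[OF z, of "cconj y"] cy by simp
  hence "y = 0" using neg11[OF y] by fastforce
  have "?b x' (cconj x') = 0"
    using pair[of x'] o20[of x x'] x x' o20[OF x', of y] y sym[of y] sym[of z] z_eq by simp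
  hence "x' = 0" using pos20[OF x'] by fastforce
  show "u = 0" using u z_eq \<open>x = 0\<close> \<open>y = 0\<close> \<open>x' = 0\<close> by (simp add: cconj_def vec_eq_iff)
qed

lemma polarization_det_nonzero:
  assumes "hodge_weight2 H20 H11 H02" and pol: "polarization B H20 H11 H02"
  shows "det B \<noteq> 0"
proof
  assume "det B = 0"
  hence "\<not> invertible B" by (simp add: invertible_det_nz)
  then obtain v where Bv: "B *v v = 0" and "v \<noteq> 0"
    by (auto simp: invertible_left_inverse matrix_left_invertible_ker)
  have sym: "transpose (cmat B) = cmat B" using pol by (simp add: polarization_def transpose_cmat)
  have "bilin (cmat B) (cvec v) w = 0" for w
  proof -
    have "bilin (cmat B) (cvec v) w = bilin (cmat B) w (cvec v)" by (rule bilin_commute[OF sym])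
    also have "\<dots> = 0" unfolding bilin_eq_sum_matrix_vector_mult cmat_mult_cvec Bv
      by (simp add: cvec_def)
    finally show ?thesis .
  qed
  hence "cvec v = 0" using polarization_radical_trivial assms by blast
  with \<open>v \<noteq> 0\<close> show False by (simp add: cvec_eq_0_iff)
qed

section \<open>The determinant of \<open>t + J\<close> when \<open>J\<^sup>2 = d\<close>\<close>

lemma det_mat: "det (mat c :: 'a::comm_ring_1^'n^'n) = c ^ CARD('n)"
  by (simp add: det_diagonal mat_def)

lemma mat_mult_vector: "mat c *v x = c *s (x :: 'a::semiring_1^'n)"
  by (simp add: matrix_vector_mult_def mat_def vec_eq_iff if_distrib if_distribR cong: if_cong)

lemma matrix_vector_mult_smult: "A *v (c *s x) = c *s (A *v (x :: 'a::comm_semiring_1^'n))"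
  by (simp add: matrix_vector_mult_def vec_eq_iff sum_distrib_left mult_ac)

lemma mat_plus_mult_mat_minus:
  fixes J :: "'a::comm_ring_1^'n^'n"
  assumes "J ** J = mat d"
  shows "(mat t + J) ** (mat t - J) = mat (t^2 - d)"
proof -
  have "J *v (J *v x) = d *s x" for x
    using assms by (simp add: matrix_vector_mul_assoc mat_mult_vector)
  thus ?thesis
    by (simp add: matrix_eq matrix_vector_mul_assoc[symmetric] mat_mult_vector algebra_simps
        matrix_vector_mult_smult vector_ssub_ldistrib vector_smult_assoc vector_sub_rdistrib
        power2_eq_square)
qed

lemma mat_minus_eq_neg_mat_plus:
  fixes J :: "'a::comm_ring_1^'n^'n"
  shows "mat t - J = mat (-1) ** (mat (-t) + J)"
  by (simp add: matrix_eq matrix_vector_mul_assoc[symmetric] mat_mult_vector algebra_simps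
      vector_smult_lneg vector_add_ldistrib)

lemma det_mat_plus_mult_reflect:
  fixes J :: "'a::comm_ring_1^'n^'n"
  assumes "J ** J = mat d"
  shows "det (mat t + J) * ((-1)^CARD('n) * det (mat (-t) + J)) = (t^2 - d)^CARD('n)"
  using det_mul[of "mat t + J" "mat t - J"] det_mul[of "mat (-1)" "mat (-t) + J"]
  by (simp add: mat_plus_mult_mat_minus[OF assms] mat_minus_eq_neg_mat_plus[symmetric] det_mat)

definition det_plus_poly :: "'a::comm_ring_1^'n^'n \<Rightarrow> 'a poly" where
  "det_plus_poly J = det (\<chi> i j. [:J$i$j, of_bool (i = j):])"

lemma poly_det: "poly (det M) t = det (\<chi> i j. poly (M$i$j) t)"
  unfolding det_def by (simp add: poly_sum poly_prod)

lemma poly_det_plus_poly: "poly (det_plus_poly J) t = det (mat t + J)"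
proof -
  have "(\<chi> i j. poly [:J$i$j, of_bool (i = j):] t) = mat t + J"
    by (simp add: vec_eq_iff mat_def)
  thus ?thesis unfolding det_plus_poly_def poly_det by simp
qed

lemma prime_quadratic_poly:
  fixes d :: "'a::field_gcd"
  assumes nonsquare: "\<And>r. r^2 \<noteq> d"
  shows "prime [:-d, 0, 1:]"
proof -
  let ?p = "[:-d, 0, 1:]"
  have "irreducible ?p"
  proof (rule irreducibleI)
    show "?p \<noteq> 0" and "\<not> is_unit ?p" using is_unit_iff_degree[of ?p] by simp_all
    fix a b assume ab: "?p = a * b"
    show "is_unit a \<or> is_unit b"
    proof (rule ccontr)
      assume "\<not> (is_unit a \<or> is_unit b)"
      moreover have "a \<noteq> 0" and "b \<noteq> 0" using ab by auto
      ultimately have "degree a \<noteq> 0" and "degree b \<noteq> 0" and "degree a + degree b = degree ?p"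
        using is_unit_iff_degree degree_mult_eq[of a b] unfolding ab by auto
      hence "degree a = 1" by simp
      then obtain u v where a: "a = [:v, u:]" and "u \<noteq> 0" by (rule degree1_coeffs)
      hence "poly ?p (- v / u) = 0" using ab by simp
      hence "(- v / u)^2 = d" by (simp add: power2_eq_square algebra_simps)
      with nonsquare show False by blast
    qed
  qed
  hence "prime_elem ?p" by (rule field_poly_irreducible_imp_prime)
  moreover have "normalize ?p = ?p" by (simp add: normalize_poly_eq_map_poly)
  ultimately show ?thesis unfolding prime_def by blast
qed

lemma dvd_prime_power_poly:
  fixes p F :: "'a::field_gcd poly"
  assumes "prime p" and "F dvd p^n"
  obtains c m where "c \<noteq> 0" and "F = smult c (p^m)"
proof -
  obtain m where nF: "normalize F = p^m" using divides_primepow[OF assms] by blast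
  have "F \<noteq> 0" using nF assms(1) by auto
  hence "is_unit (unit_factor F)" by simp
  then obtain c where uc: "unit_factor F = [:c:]" and "c dvd 1"
    by (auto simp: is_unit_poly_iff)
  hence "c \<noteq> 0" by auto
  have "F = smult c (p^m)"
    using normalize_mult_unit_factor[of F] unfolding nF uc by simp
  with \<open>c \<noteq> 0\<close> show ?thesis using that by blast
qed

lemma det_mat_plus_eq_power:
  fixes J :: "'a::{field_gcd, field_char_0}^'n^'n"
  assumes JJ: "J ** J = mat d" and nonsquare: "\<And>r. r^2 \<noteq> d"
  obtains m c where "CARD('n) = 2 * m" and "c^2 = 1" and "\<And>t. det (mat t + J) = c * (t^2 - d)^m"
proof -
  let ?n = "CARD('n)" and ?p = "[:-d, 0, 1:]" and ?F = "det_plus_poly J"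
  have poly_p: "poly ?p t = t^2 - d" for t by (simp add: power2_eq_square)
  define G where "G = smult ((-1)^?n) (?F \<circ>\<^sub>p [:0, -1:])"
  have "poly (?F * G) t = poly (?p^?n) t" for t
  proof -
    have "poly (?F * G) t = det (mat t + J) * ((-1)^?n * det (mat (-t) + J))"
      by (simp add: G_def poly_pcompose poly_det_plus_poly)
    also have "\<dots> = poly (?p^?n) t"
      by (simp add: det_mat_plus_mult_reflect[OF JJ] power2_eq_square)
    finally show ?thesis .
  qed
  hence "?F * G = ?p^?n" by (intro poly_eq_poly_eq_iff[THEN iffD1] ext)
  hence "?F dvd ?p^?n" by (metis dvd_triv_left)
  then obtain c m where "c \<noteq> 0" and F: "?F = smult c (?p^m)"
    using dvd_prime_power_poly prime_quadratic_poly[OF nonsquare] by blast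
  have det: "det (mat t + J) = c * (t^2 - d)^m" for t
    using poly_det_plus_poly[of J t] by (simp add: F power2_eq_square)
  have "poly (smult (c^2 * (-1)^?n) (?p^(2 * m))) t = poly (?p^?n) t" for t
  proof -
    have "poly (smult (c^2 * (-1)^?n) (?p^(2 * m))) t
        = c * (t^2 - d)^m * ((-1)^?n * (c * ((-t)^2 - d)^m))"
      by (simp add: poly_p power2_eq_square mult_ac flip: power_add mult_2)
    also have "\<dots> = poly (?p^?n) t"
      using det_mat_plus_mult_reflect[OF JJ, of t] by (simp add: det power2_eq_square)
    finally show ?thesis .
  qed
  hence eq: "smult (c^2 * (-1)^?n) (?p^(2 * m)) = ?p^?n"
    by (intro poly_eq_poly_eq_iff[THEN iffD1] ext)
  have "degree (smult (c^2 * (-1)^?n) (?p^(2 * m))) = degree (?p^?n)" by (simp only: eq)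
  hence n: "?n = 2 * m" using \<open>c \<noteq> 0\<close> by (simp add: degree_power_eq)
  have "c^2 * (-1)^?n * lead_coeff (?p^(2 * m)) = lead_coeff (?p^?n)"
    by (metis eq lead_coeff_smult)
  hence "c^2 * (-1)^?n = 1" by (simp only: lead_coeff_power) simp
  hence "c^2 = 1" by (simp add: n)
  with n det show ?thesis using that by blast
qed

theorem mainTheorem9:
  fixes d :: int and B J :: "rat^'n^'n"
    and H20 H11 H02 :: "(complex^'n) set"
  assumes "d > 1" and "squarefree d"
    and "K3_type B H20 H11 H02"
    and "J ** J = mat (of_int d)"
    and "\<forall>M. hodge_endo H20 H11 H02 M \<longleftrightarrow> (\<exists>p q :: rat. M = mat p + (\<chi> i j. q * J$i$j))"
    and "odd (CARD('n) div 2)"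
  shows "totally_positive d (of_int d + sqrt (of_int d)) \<and>
         \<not> (\<exists>P :: rat^'n^'n. invertible P \<and>
              (\<forall>v w. bilin B ((mat (of_int d) + J) *v (P *v v)) (P *v w) = bilin B v w))"
proof (intro conjI notI)
  show "totally_positive d (of_int d + sqrt (of_int d))"
    using totally_positive_plus_sqrt[OF assms(1)] .
next
  assume "\<exists>P :: rat^'n^'n. invertible P \<and>
            (\<forall>v w. bilin B ((mat (of_int d) + J) *v (P *v v)) (P *v w) = bilin B v w)"
  then obtain P :: "rat^'n^'n"
    where isometry: "\<forall>v w. bilin B ((mat (of_int d) + J) *v (P *v v)) (P *v w) = bilin B v w"
    by blast
  have nonsquare: "r^2 \<noteq> (of_int d :: rat)" for r
    using int_square_of_rat_square squarefree_int_not_square[OF assms(1,2)] by metis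
  obtain m c where n: "CARD('n) = 2 * m" and "c^2 = 1"
    and det: "\<And>t. det (mat t + J) = c * (t^2 - of_int d)^m"
    using det_mat_plus_eq_power[OF assms(4) nonsquare] by blast
  have "det B \<noteq> 0"
    using assms(3) polarization_det_nonzero unfolding K3_type_def by blast
  from det_isometry_mult[OF this isometry]
  have "c * (of_int d^2 - of_int d)^m * det P^2 = 1" by (simp add: det)
  moreover have "odd m" and "(of_int d^2 - of_int d :: rat) > 0"
    using assms(1,6) n by (simp_all add: power2_eq_square)
  ultimately obtain q :: rat where "q^2 = of_int d^2 - of_int d"
    using square_of_odd_power_times_square[OF \<open>c^2 = 1\<close>] by blast
  hence "q^2 = of_int (d * (d - 1))" by (simp add: algebra_simps power2_eq_square)
  thus False using int_square_of_rat_square mult_pred_not_square[OF assms(1)] by metis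
qed

end
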